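(* Let $\varepsilon>0$, $\delta\in(0,1)$, $T\in\mathbb{R}$, and let $\{f_i\}_{i\in\mathbb{N}}$ be real-valued queries on datasets that are each 1-sensitive (i.e. $|f_i(D)-f_i(D')|\le 1$ for neighboring $D,D'$) and have unidirectional sensitivity: for all neighboring datasets $D,D'$, if $f_i(D)>f_i(D')$ for some $i$, then there is no $j$ with $f_j(D)<f_j(D')$. Let $q$ be the $\left(1-\frac{\delta}{2(1+e^{\varepsilon})}\right)$-quantile of $\mathrm{Lap}(2/\varepsilon)$. Consider StrictUDSAboveThreshold: on input $D$, sample $\hat T\gets T+\mathrm{Lap}(2/\varepsilon)-2q$; then for $i=1,2,\dots$, sample a fresh $\nu_i\sim\mathrm{Lap}(2/\varepsilon)$; if $f_i(D)\ge T$ or $f_i(D)+\nu_i\ge\hat T$, output $a_i=\top$ and halt; otherwise output $a_i=\bot$ and continue. Then StrictUDSAboveThreshold (whose output is the stream $a_1,a_2,\dots$) is $(\varepsilon,\delta)$-differentially private.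
   Context: $\mathrm{Lap}(b)$ is the Laplace distribution with mean $0$ and scale $b$, density $\frac{1}{2b}e^{-|x|/b}$; all Laplace samples are independent. The $\phi$-quantile of a distribution is the value $x$ with $\Pr[X\le x]=\phi$. Two datasets are neighboring if they differ by replacing the contribution of one individual. A randomized algorithm $M$ is $(\varepsilon,\delta)$-differentially private if for every pair of neighboring datasets $D,D'$ and every set of outcomes $S$, $\Pr[M(D)\in S]\le e^{\varepsilon}\Pr[M(D')\in S]+\delta$ and symmetrically with $D,D'$ swapped. *)

theory Defs
  imports "HOL-Probability.Probability"
begin

definition laplace :: "real \<Rightarrow> real measure" where
  "laplace b = density lborel (\<lambda>x. ennreal (exp (- \<bar>x\<bar> / b) / (2 * b)))"

definition diff_private ::
  "real \<Rightarrow> real \<Rightarrow> ('d \<Rightarrow> 'd \<Rightarrow> bool) \<Rightarrow> ('d \<Rightarrow> 'o measure) \<Rightarrow> bool" where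
  "diff_private eps delta nbr M \<longleftrightarrow>
     (\<forall>D D'. nbr D D' \<longrightarrow>
        (\<forall>S \<in> sets (M D). measure (M D) S \<le> exp eps * measure (M D') S + delta) \<and>
        (\<forall>S \<in> sets (M D'). measure (M D') S \<le> exp eps * measure (M D) S + delta))"

text \<open>The halting index of StrictUDSAboveThreshold on dataset D, given the threshold
  noise z and the query noises nu: the output stream is bot,...,bot,top with top at
  position i (Some i), or the infinite all-bot stream (None).\<close>
definition strict_uds_halt ::
  "(nat \<Rightarrow> 'd \<Rightarrow> real) \<Rightarrow> real \<Rightarrow> real \<Rightarrow> 'd \<Rightarrow> real \<Rightarrow> (nat \<Rightarrow> real) \<Rightarrow> nat option" where
  "strict_uds_halt f T q D z nu =
     (let P = (\<lambda>i. f i D \<ge> T \<or> f i D + nu i \<ge> T + z - 2 * q)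
      in if \<exists>i. P i then Some (LEAST i. P i) else None)"

definition strict_uds_above_threshold ::
  "real \<Rightarrow> (nat \<Rightarrow> 'd \<Rightarrow> real) \<Rightarrow> real \<Rightarrow> real \<Rightarrow> 'd \<Rightarrow> nat option measure" where
  "strict_uds_above_threshold eps f T q D =
     distr (laplace (2 / eps) \<Otimes>\<^sub>M (\<Pi>\<^sub>M i\<in>(UNIV :: nat set). laplace (2 / eps)))
           (count_space UNIV)
           (\<lambda>(z, nu). strict_uds_halt f T q D z nu)"

end

theory Submission
  imports Defs
begin

(* The mechanism sees a dataset D only through its answer vector (f i D)_i, and unidirectional
   sensitivity makes the answer vectors lo, hi of neighbours pointwise ordered with
   lo <= hi <= lo + 1.  Shifting a Lap(b) variable by s changes its density by a factor of at
   most exp(|s|/b), so any coupling of the two runs that shifts the threshold noise z and the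
   noise nu_k of one query by at most 2 in total costs exp(2/b) = exp eps.  Such a coupling
   exists for every output up to the first index j with T <= hi j.  The exact test at j is the
   one comparison that cannot be coupled: it matters only when the lower run does not halt
   at j, which forces nu_j - z < 1 - 2q, an event of probability at most
   P(z > q) + P(nu_j < 1 - q) <= (1 + exp(eps/2)) * delta / (2 (1 + exp eps)) <= delta. *)

lemma emeasure_discrete_le_mult_add:
  fixes N1 N2 :: "'a::countable measure" and K d :: ennreal
  assumes "sets N1 = UNIV" "sets N2 = UNIV" "1 \<le> K"
    and good: "\<And>y. y \<notin> B \<Longrightarrow> emeasure N1 {y} \<le> K * emeasure N2 {y}"
    and bad: "emeasure N1 (A \<inter> B) \<le> emeasure N2 (A \<inter> B) + d"
  shows "emeasure N1 A \<le> K * emeasure N2 A + d"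
proof -
  have decompose: "emeasure N A = emeasure N (A - B) + emeasure N (A \<inter> B)"
    if "sets N = UNIV" for N :: "'a measure"
    using that by (subst plus_emeasure) (auto simp: Un_Diff_Int)
  have "emeasure N1 (A - B) = (\<integral>\<^sup>+y. emeasure N1 {y} \<partial>count_space (A - B))"
    using assms(1) by (intro emeasure_countable_singleton) auto
  also have "\<dots> \<le> (\<integral>\<^sup>+y. K * emeasure N2 {y} \<partial>count_space (A - B))"
    using good by (intro nn_integral_mono) simp
  also have "\<dots> = K * (\<integral>\<^sup>+y. emeasure N2 {y} \<partial>count_space (A - B))"
    by (rule nn_integral_cmult) simp
  also have "\<dots> = K * emeasure N2 (A - B)"
    using assms(2) by (simp add: emeasure_countable_singleton[of "A - B" N2, symmetric])
  finally have good_part: "emeasure N1 (A - B) \<le> K * emeasure N2 (A - B)" .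
  have "emeasure N1 A \<le> K * emeasure N2 (A - B) + (emeasure N2 (A \<inter> B) + d)"
    unfolding decompose[OF assms(1)] using good_part bad by (rule add_mono)
  also have "\<dots> \<le> K * emeasure N2 (A - B) + (K * emeasure N2 (A \<inter> B) + d)"
    using mult_right_mono[OF \<open>1 \<le> K\<close>, of "emeasure N2 (A \<inter> B)"] by (intro add_mono) simp_all
  also have "\<dots> = K * emeasure N2 A + d"
    unfolding decompose[OF assms(2)] by (simp add: distrib_left add.assoc)
  finally show ?thesis .
qed

lemma measure_le_of_emeasure_le:
  assumes "finite_measure M" "finite_measure N" "0 \<le> K" "0 \<le> d"
    and "emeasure M S \<le> ennreal K * emeasure N S + ennreal d"
  shows "measure M S \<le> K * measure N S + d"
proof -
  interpret M: finite_measure M by fact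
  interpret N: finite_measure N by fact
  have "ennreal (measure M S) \<le> ennreal K * ennreal (measure N S) + ennreal d"
    using assms(5) unfolding M.emeasure_eq_measure N.emeasure_eq_measure .
  also have "\<dots> = ennreal (K * measure N S + d)"
    using assms(3,4) by (simp add: ennreal_mult ennreal_plus)
  finally show ?thesis
    using assms(3,4) by (subst (asm) ennreal_le_iff) auto
qed

definition first_index :: "(nat \<Rightarrow> bool) \<Rightarrow> nat option" where
  "first_index P = (if \<exists>i. P i then Some (LEAST i. P i) else None)"

lemma first_index_eq_Some_iff: "first_index P = Some k \<longleftrightarrow> P k \<and> (\<forall>i<k. \<not> P i)"
proof
  assume "first_index P = Some k"
  then show "P k \<and> (\<forall>i<k. \<not> P i)"
    unfolding first_index_def by (metis LeastI not_less_Least option.distinct(1) option.inject)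
next
  assume "P k \<and> (\<forall>i<k. \<not> P i)"
  then show "first_index P = Some k"
    unfolding first_index_def by (metis Least_equality not_le)
qed

lemma first_index_eq_None_iff: "first_index P = None \<longleftrightarrow> (\<forall>i. \<not> P i)"
  by (simp add: first_index_def)

lemma first_index_le:
  assumes "P j"
  obtains k where "k \<le> j" and "first_index P = Some k"
  using assms unfolding first_index_def by (metis Least_le)

lemma measurable_first_index [measurable]:
  assumes [measurable]: "\<And>i. Measurable.pred M (P i)"
  shows "(\<lambda>x. first_index (\<lambda>i. P i x)) \<in> M \<rightarrow>\<^sub>M count_space UNIV"
proof (rule measurable_count_space_eq2_countable[THEN iffD2], intro conjI ballI)
  fix y :: "nat option"
  show "(\<lambda>x. first_index (\<lambda>i. P i x)) -` {y} \<inter> space M \<in> sets M"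
  proof (cases y)
    case None
    then have "(\<lambda>x. first_index (\<lambda>i. P i x)) -` {y} \<inter> space M = {x \<in> space M. \<forall>i. \<not> P i x}"
      by (auto simp: first_index_eq_None_iff)
    then show ?thesis by simp
  next
    case (Some k)
    then have "(\<lambda>x. first_index (\<lambda>i. P i x)) -` {y} \<inter> space M
        = {x \<in> space M. P k x \<and> (\<forall>i<k. \<not> P i x)}"
      by (auto simp: first_index_eq_Some_iff)
    then show ?thesis by simp
  qed
qed simp

lemma nn_integral_PiM_remove_coordinate:
  fixes M :: "'a measure" and I :: "'i set"
  assumes M: "prob_space M" and "k \<in> I" and H: "H \<in> borel_measurable (\<Pi>\<^sub>M i\<in>I. M)"
  shows "(\<integral>\<^sup>+X. H X \<partial>(\<Pi>\<^sub>M i\<in>I. M)) = (\<integral>\<^sup>+X. (\<integral>\<^sup>+x. H (X(k := x)) \<partial>M) \<partial>(\<Pi>\<^sub>M i\<in>I - {k}. M))"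
proof -
  let ?R = "\<Pi>\<^sub>M i\<in>I - {k}. M"
  interpret R: prob_space ?R
    using M by (intro prob_space_PiM)
  interpret MR: pair_sigma_finite M ?R
    using M
    by (intro pair_sigma_finite.intro prob_space_imp_sigma_finite R.sigma_finite_measure_axioms)
  have insert_k: "(\<lambda>(x, X). X(k := x)) \<in> M \<Otimes>\<^sub>M ?R \<rightarrow>\<^sub>M (\<Pi>\<^sub>M i\<in>I. M)"
    using measurable_fun_upd[of I "I - {k}" k snd "M \<Otimes>\<^sub>M ?R" "\<lambda>_. M" fst] \<open>k \<in> I\<close>
    by (auto simp: case_prod_beta')
  have "distr (M \<Otimes>\<^sub>M ?R) (\<Pi>\<^sub>M i\<in>I. M) (\<lambda>(x, X). X(k := x)) = (\<Pi>\<^sub>M i\<in>I. M)"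
    using distr_pair_PiM_eq_PiM[of "I - {k}" "\<lambda>_. M" k] M \<open>k \<in> I\<close> by (simp add: insert_absorb)
  then have "(\<integral>\<^sup>+X. H X \<partial>(\<Pi>\<^sub>M i\<in>I. M)) = (\<integral>\<^sup>+(x, X). H (X(k := x)) \<partial>(M \<Otimes>\<^sub>M ?R))"
    using nn_integral_distr[OF insert_k, of H] H by (simp add: case_prod_beta')
  also have "\<dots> = (\<integral>\<^sup>+X. (\<integral>\<^sup>+x. H (X(k := x)) \<partial>M) \<partial>?R)"
    using H insert_k by (subst MR.nn_integral_snd[symmetric]) (auto simp: case_prod_beta')
  finally show ?thesis .
qed

lemma nn_integral_PiM_fun_upd_le:
  fixes M :: "'a measure" and I :: "'i set" and C :: ennreal
  assumes M: "prob_space M" and "k \<in> I" and g: "g \<in> M \<rightarrow>\<^sub>M M"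
    and g_le: "\<And>G. G \<in> borel_measurable M \<Longrightarrow> (\<integral>\<^sup>+x. G (g x) \<partial>M) \<le> C * (\<integral>\<^sup>+x. G x \<partial>M)"
    and F: "F \<in> borel_measurable (\<Pi>\<^sub>M i\<in>I. M)"
  shows "(\<integral>\<^sup>+X. F (X(k := g (X k))) \<partial>(\<Pi>\<^sub>M i\<in>I. M)) \<le> C * (\<integral>\<^sup>+X. F X \<partial>(\<Pi>\<^sub>M i\<in>I. M))"
proof -
  let ?R = "\<Pi>\<^sub>M i\<in>I - {k}. M"
  interpret M: prob_space M
    by (fact M)
  have F_upd: "(\<lambda>(X, x). F (X(k := x))) \<in> borel_measurable (?R \<Otimes>\<^sub>M M)"
    using measurable_comp[OF measurable_fun_upd[of I "I - {k}" k fst "?R \<Otimes>\<^sub>M M" "\<lambda>_. M" snd] F]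
      \<open>k \<in> I\<close>
    by (auto simp: comp_def case_prod_beta')
  have upd: "(\<lambda>X. X(k := g (X k))) \<in> (\<Pi>\<^sub>M i\<in>I. M) \<rightarrow>\<^sub>M (\<Pi>\<^sub>M i\<in>I. M)"
    using \<open>k \<in> I\<close> g
    by (intro measurable_fun_upd[where J=I])
      (auto intro: measurable_compose[OF measurable_component_singleton])
  have "(\<integral>\<^sup>+X. F (X(k := g (X k))) \<partial>(\<Pi>\<^sub>M i\<in>I. M)) = (\<integral>\<^sup>+X. (\<integral>\<^sup>+x. F (X(k := g x)) \<partial>M) \<partial>?R)"
    using nn_integral_PiM_remove_coordinate[OF M \<open>k \<in> I\<close> measurable_comp[OF upd F]]
    by (simp add: comp_def)
  also have "\<dots> \<le> (\<integral>\<^sup>+X. C * (\<integral>\<^sup>+x. F (X(k := x)) \<partial>M) \<partial>?R)"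
    using measurable_Pair2[OF F_upd] by (intro nn_integral_mono g_le) simp
  also have "\<dots> = C * (\<integral>\<^sup>+X. (\<integral>\<^sup>+x. F (X(k := x)) \<partial>M) \<partial>?R)"
    using M.borel_measurable_nn_integral_fst[OF F_upd] by (intro nn_integral_cmult) simp
  also have "\<dots> = C * (\<integral>\<^sup>+X. F X \<partial>(\<Pi>\<^sub>M i\<in>I. M))"
    using nn_integral_PiM_remove_coordinate[OF M \<open>k \<in> I\<close> F] by simp
  finally show ?thesis .
qed

lemma sets_laplace [measurable_cong]: "sets (laplace b) = sets borel"
  by (simp add: laplace_def)

lemma space_laplace [simp]: "space (laplace b) = UNIV"
  by (simp add: laplace_def)

lemma prob_space_laplace:
  assumes "b > 0"
  shows "prob_space (laplace b)"
proof
  define l where "l = 1 / b"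
  have "l > 0" using assms by (simp add: l_def)
  let ?e = "\<lambda>x. ennreal (exponential_density l x)"
  have int_e: "(\<integral>\<^sup>+x. ?e x \<partial>lborel) = 1"
  proof -
    interpret prob_space "density lborel (exponential_density l)"
      using prob_space_exponential_density[OF \<open>l > 0\<close>] .
    show ?thesis using emeasure_space_1 by (simp add: emeasure_density)
  qed
  have int_e_reflected: "(\<integral>\<^sup>+x. ?e (- x) \<partial>lborel) = 1"
    using nn_integral_real_affine[of ?e "-1" 0] int_e by simp
  \<comment> \<open>Off \<open>{0}\<close>, the Laplace density is the mean of two reflected exponential densities.\<close>
  have density_eq: "AE x in lborel.
      ennreal (exp (- \<bar>x\<bar> / b) / (2 * b)) = ennreal (1/2) * ?e x + ennreal (1/2) * ?e (- x)"
    using AE_lborel_singleton[of 0]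
  proof eventually_elim
    case (elim x)
    have "exp (- \<bar>x\<bar> / b) / (2 * b)
        = 1/2 * exponential_density l x + 1/2 * exponential_density l (- x)"
      using elim assms by (cases "x < 0") (auto simp: exponential_density_def l_def field_simps)
    moreover have "0 \<le> exponential_density l t" for t
      using \<open>l > 0\<close> by (simp add: exponential_density_def)
    ultimately show ?case
      by (simp only: ennreal_plus ennreal_mult mult_nonneg_nonneg divide_nonneg_nonneg
          zero_le_one zero_le_numeral)
  qed
  have "emeasure (laplace b) (space (laplace b))
      = (\<integral>\<^sup>+x. ennreal (exp (- \<bar>x\<bar> / b) / (2 * b)) \<partial>lborel)"
    by (simp add: laplace_def emeasure_density)
  also have "\<dots> = (\<integral>\<^sup>+x. ennreal (1/2) * ?e x + ennreal (1/2) * ?e (- x) \<partial>lborel)"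
    by (rule nn_integral_cong_AE[OF density_eq])
  also have "\<dots> = ennreal (1/2) + ennreal (1/2)"
    by (subst nn_integral_add) (auto simp: nn_integral_cmult int_e int_e_reflected)
  also have "\<dots> = 1"
    by (subst ennreal_plus[symmetric]) auto
  finally show "emeasure (laplace b) (space (laplace b)) = 1" .
qed

lemma nn_integral_laplace_shift_le:
  assumes "b > 0" and [measurable]: "G \<in> borel_measurable (laplace b)"
  shows "(\<integral>\<^sup>+x. G (x + c) \<partial>laplace b) \<le> exp (\<bar>c\<bar> / b) * (\<integral>\<^sup>+x. G x \<partial>laplace b)"
proof -
  let ?p = "\<lambda>x. exp (- \<bar>x\<bar> / b) / (2 * b)"
  have density_shift: "ennreal (?p (y - c)) \<le> exp (\<bar>c\<bar> / b) * ennreal (?p y)" for y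
  proof -
    have "- \<bar>y - c\<bar> / b \<le> \<bar>c\<bar> / b + - \<bar>y\<bar> / b"
      using assms abs_triangle_ineq2[of y c] by (simp add: field_simps)
    then have "?p (y - c) \<le> exp (\<bar>c\<bar> / b) * ?p y"
      using assms by (simp add: divide_right_mono flip: exp_add)
    then have "ennreal (?p (y - c)) \<le> ennreal (exp (\<bar>c\<bar> / b) * ?p y)"
      by (rule ennreal_leI)
    also have "\<dots> = exp (\<bar>c\<bar> / b) * ennreal (?p y)"
      by (rule ennreal_mult) (use assms in auto)
    finally show ?thesis .
  qed
  have "(\<integral>\<^sup>+x. G (x + c) \<partial>laplace b) = (\<integral>\<^sup>+x. ennreal (?p x) * G (x + c) \<partial>lborel)"
    by (simp add: laplace_def nn_integral_density)
  also have "\<dots> = (\<integral>\<^sup>+y. ennreal (?p (y - c)) * G y \<partial>lborel)"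
    using nn_integral_real_affine[of "\<lambda>y. ennreal (?p (y - c)) * G y" 1 c]
    by (simp add: add.commute)
  also have "\<dots> \<le> (\<integral>\<^sup>+y. exp (\<bar>c\<bar> / b) * (ennreal (?p y) * G y) \<partial>lborel)"
    by (intro nn_integral_mono) (metis density_shift mult.assoc mult_right_mono zero_le)
  also have "\<dots> = exp (\<bar>c\<bar> / b) * (\<integral>\<^sup>+x. G x \<partial>laplace b)"
    by (simp add: nn_integral_cmult laplace_def nn_integral_density)
  finally show ?thesis .
qed

lemma emeasure_laplace_lessThan_uminus:
  "emeasure (laplace b) {..< - q} = emeasure (laplace b) {q<..}"
proof -
  let ?p = "\<lambda>x. ennreal (exp (- \<bar>x\<bar> / b) / (2 * b))"
  have "emeasure (laplace b) {..< - q} = (\<integral>\<^sup>+x. ?p x * indicator {..< - q} x \<partial>lborel)"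
    by (simp add: laplace_def emeasure_density)
  also have "\<dots> = (\<integral>\<^sup>+x. ?p (- x) * indicator {..< - q} (- x) \<partial>lborel)"
    using nn_integral_real_affine[of "\<lambda>x. ?p x * indicator {..< - q} x" "-1" 0] by simp
  also have "\<dots> = (\<integral>\<^sup>+x. ?p x * indicator {q<..} x \<partial>lborel)"
    by (intro nn_integral_cong) (simp split: split_indicator)
  also have "\<dots> = emeasure (laplace b) {q<..}"
    by (simp add: laplace_def emeasure_density)
  finally show ?thesis .
qed

abbreviation laplace_seq :: "real \<Rightarrow> (nat \<Rightarrow> real) measure" where
  "laplace_seq b \<equiv> \<Pi>\<^sub>M i\<in>UNIV. laplace b"

abbreviation laplace_noise :: "real \<Rightarrow> (real \<times> (nat \<Rightarrow> real)) measure" where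
  "laplace_noise b \<equiv> laplace b \<Otimes>\<^sub>M laplace_seq b"

lemma space_laplace_seq [simp]: "space (laplace_seq b) = UNIV"
  by (simp add: space_PiM)

lemma space_laplace_noise [simp]: "space (laplace_noise b) = UNIV"
  by (simp add: space_pair_measure)

lemma sets_Collect_laplace_noise [measurable (raw)]:
  assumes [measurable]: "Measurable.pred (laplace_noise b) P"
  shows "{x. P x} \<in> sets (laplace_noise b)"
proof -
  have "{x \<in> space (laplace_noise b). P x} \<in> sets (laplace_noise b)"
    by measurable
  then show ?thesis
    by simp
qed

lemma prob_space_laplace_noise:
  assumes "b > 0"
  shows "prob_space (laplace_noise b)"
proof -
  interpret L: prob_space "laplace b"
    using prob_space_laplace[OF assms] .
  interpret S: prob_space "laplace_seq b"
    by (intro prob_space_PiM L.prob_space_axioms)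
  interpret pair_prob_space "laplace b" "laplace_seq b" ..
  show ?thesis
    by (rule prob_space_axioms)
qed

lemma measurable_laplace_noise_components [measurable]:
  "fst \<in> borel_measurable (laplace_noise b)"
  "(\<lambda>x. snd x i) \<in> borel_measurable (laplace_noise b)"
  by (simp_all cong: measurable_cong_sets)

lemma measurable_laplace_seq_shift [measurable]:
  "(\<lambda>nu. nu(k := nu k + c)) \<in> laplace_seq b \<rightarrow>\<^sub>M laplace_seq b"
  by (rule measurable_fun_upd[where J=UNIV]) auto

lemma nn_integral_laplace_noise_shift_le:
  assumes "b > 0" and F[measurable]: "F \<in> borel_measurable (laplace_noise b)"
  shows "(\<integral>\<^sup>+x. F (fst x + a, (snd x)(k := snd x k + c)) \<partial>laplace_noise b)
    \<le> exp ((\<bar>a\<bar> + \<bar>c\<bar>) / b) * (\<integral>\<^sup>+x. F x \<partial>laplace_noise b)"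
proof -
  let ?S = "laplace_seq b"
  interpret L: prob_space "laplace b"
    using prob_space_laplace[OF assms(1)] .
  interpret S: prob_space ?S
    by (intro prob_space_PiM L.prob_space_axioms)
  interpret pair_sigma_finite "laplace b" ?S ..
  define H where "H z = (\<integral>\<^sup>+nu. F (z, nu) \<partial>?S)" for z
  have H[measurable]: "H \<in> borel_measurable (laplace b)"
    unfolding H_def by measurable
  have "(\<integral>\<^sup>+x. F (fst x + a, (snd x)(k := snd x k + c)) \<partial>laplace_noise b)
      = (\<integral>\<^sup>+z. (\<integral>\<^sup>+nu. F (z + a, nu(k := nu k + c)) \<partial>?S) \<partial>laplace b)"
    by (subst S.nn_integral_fst[symmetric]) auto
  also have "\<dots> \<le> (\<integral>\<^sup>+z. exp (\<bar>c\<bar> / b) * H (z + a) \<partial>laplace b)"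
    unfolding H_def
    by (intro nn_integral_mono nn_integral_PiM_fun_upd_le nn_integral_laplace_shift_le
        L.prob_space_axioms assms(1)) auto
  also have "\<dots> = exp (\<bar>c\<bar> / b) * (\<integral>\<^sup>+z. H (z + a) \<partial>laplace b)"
    by (rule nn_integral_cmult) measurable
  also have "\<dots> \<le> exp (\<bar>c\<bar> / b) * (exp (\<bar>a\<bar> / b) * (\<integral>\<^sup>+z. H z \<partial>laplace b))"
    by (intro mult_left_mono nn_integral_laplace_shift_le assms(1) H) simp
  also have "(\<integral>\<^sup>+z. H z \<partial>laplace b) = (\<integral>\<^sup>+x. F x \<partial>laplace_noise b)"
    unfolding H_def by (subst S.nn_integral_fst[symmetric]) auto
  also have "exp (\<bar>c\<bar> / b) * (exp (\<bar>a\<bar> / b) * (\<integral>\<^sup>+x. F x \<partial>laplace_noise b))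
      = exp ((\<bar>a\<bar> + \<bar>c\<bar>) / b) * (\<integral>\<^sup>+x. F x \<partial>laplace_noise b)"
    by (simp add: add_divide_distrib exp_add ennreal_mult ac_simps)
  finally show ?thesis .
qed

lemma emeasure_laplace_noise_shift_le:
  assumes "b > 0" and [measurable]: "A \<in> sets (laplace_noise b)"
  shows "emeasure (laplace_noise b) {x. (fst x + a, (snd x)(k := snd x k + c)) \<in> A}
    \<le> exp ((\<bar>a\<bar> + \<bar>c\<bar>) / b) * emeasure (laplace_noise b) A"
proof -
  have "{x. (fst x + a, (snd x)(k := snd x k + c)) \<in> A} \<in> sets (laplace_noise b)"
    by measurable
  then have "emeasure (laplace_noise b) {x. (fst x + a, (snd x)(k := snd x k + c)) \<in> A}
      = (\<integral>\<^sup>+x. indicator {x. (fst x + a, (snd x)(k := snd x k + c)) \<in> A} x \<partial>laplace_noise b)"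
    by (rule nn_integral_indicator[symmetric])
  also have "\<dots> = (\<integral>\<^sup>+x. indicator A (fst x + a, (snd x)(k := snd x k + c)) \<partial>laplace_noise b)"
    by (intro nn_integral_cong) (simp split: split_indicator)
  also have "\<dots> \<le> exp ((\<bar>a\<bar> + \<bar>c\<bar>) / b) * emeasure (laplace_noise b) A"
    using nn_integral_laplace_noise_shift_le[OF assms(1), of "indicator A"] by simp
  finally show ?thesis .
qed

lemma emeasure_laplace_noise_component:
  assumes "b > 0" and [measurable]: "B \<in> sets borel"
  shows "emeasure (laplace_noise b) {x. fst x \<in> B} = emeasure (laplace b) B"
    and "emeasure (laplace_noise b) {x. snd x j \<in> B} = emeasure (laplace b) B"
proof -
  interpret L: prob_space "laplace b"
    using prob_space_laplace[OF assms(1)] .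
  interpret S: sequence_space "laplace b" ..
  have B: "B \<in> sets (laplace b)"
    by simp
  have "{x. fst x \<in> B} = B \<times> space (laplace_seq b)"
    by auto
  then show "emeasure (laplace_noise b) {x. fst x \<in> B} = emeasure (laplace b) B"
    using S.emeasure_pair_measure_Times[OF B sets.top] S.emeasure_space_1 by simp
  have "{x. snd x j \<in> B} = space (laplace b) \<times> {nu \<in> space (laplace_seq b). nu j \<in> B}"
    by auto
  then show "emeasure (laplace_noise b) {x. snd x j \<in> B} = emeasure (laplace b) B"
    using S.emeasure_pair_measure_Times[where N="laplace b", OF sets.top,
        of "{nu \<in> space (laplace_seq b). nu j \<in> B}"]
      sets_Collect_single'[of j UNIV "\<lambda>_. laplace b" "\<lambda>x. x \<in> B"]
      S.emeasure_PiM_Collect_single[OF _ B] L.emeasure_space_1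
    by simp
qed

definition uds_output ::
  "(nat \<Rightarrow> real) \<Rightarrow> real \<Rightarrow> real \<Rightarrow> real \<Rightarrow> (nat \<Rightarrow> real) \<Rightarrow> nat option" where
  "uds_output v T q z nu = first_index (\<lambda>i. T \<le> v i \<or> T + z - 2 * q \<le> v i + nu i)"

lemma strict_uds_halt_eq_uds_output:
  "strict_uds_halt f T q D z nu = uds_output (\<lambda>i. f i D) T q z nu"
  by (simp add: strict_uds_halt_def uds_output_def first_index_def)

lemma measurable_uds_output [measurable]:
  "(\<lambda>x. uds_output v T q (fst x) (snd x)) \<in> laplace_noise b \<rightarrow>\<^sub>M count_space UNIV"
  unfolding uds_output_def by measurable

definition uds_mechanism ::
  "real \<Rightarrow> (nat \<Rightarrow> real) \<Rightarrow> real \<Rightarrow> real \<Rightarrow> nat option measure" where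
  "uds_mechanism b v T q =
     distr (laplace_noise b) (count_space UNIV) (\<lambda>x. uds_output v T q (fst x) (snd x))"

lemma strict_uds_above_threshold_eq_uds_mechanism:
  "strict_uds_above_threshold eps f T q D = uds_mechanism (2 / eps) (\<lambda>i. f i D) T q"
  by (simp add: strict_uds_above_threshold_def uds_mechanism_def strict_uds_halt_eq_uds_output
      case_prod_beta')

lemma sets_uds_mechanism [simp]: "sets (uds_mechanism b v T q) = UNIV"
  by (simp add: uds_mechanism_def)

lemma emeasure_uds_mechanism:
  "emeasure (uds_mechanism b v T q) A
    = emeasure (laplace_noise b) {x. uds_output v T q (fst x) (snd x) \<in> A}"
  unfolding uds_mechanism_def
  by (subst emeasure_distr) (auto intro!: arg_cong[where f="emeasure (laplace_noise b)"])

lemma prob_space_uds_mechanism: "b > 0 \<Longrightarrow> prob_space (uds_mechanism b v T q)"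
  unfolding uds_mechanism_def
  by (intro prob_space.prob_space_distr prob_space_laplace_noise) simp_all

(* Raising the threshold noise by 1 absorbs hi <= lo + 1 at the queries before k, and the shift
   of nu k makes the noisy test of hi at k coincide with that of lo. *)
lemma uds_output_couple_up_Some:
  assumes "\<And>i. lo i \<le> hi i" "\<And>i. hi i \<le> lo i + 1" "\<forall>i<k. hi i < T"
    and "uds_output lo T q z nu = Some k"
  shows "uds_output hi T q (z + 1) (nu(k := nu k + (1 - (hi k - lo k)))) = Some k"
  using assms unfolding uds_output_def first_index_eq_Some_iff
  by (smt (verit, best) fun_upd_apply)

lemma uds_output_couple_up_None:
  assumes "\<And>i. hi i \<le> lo i + 1" "\<forall>i. hi i < T" and "uds_output lo T q z nu = None"
  shows "uds_output hi T q (z + 1) nu = None"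
  using assms unfolding uds_output_def first_index_eq_None_iff
  by (smt (verit, best))

lemma uds_output_couple_down_Some:
  assumes "\<And>i. lo i \<le> hi i" "hi k < T" and "uds_output hi T q z nu = Some k"
  shows "uds_output lo T q z (nu(k := nu k + (hi k - lo k))) = Some k"
  using assms unfolding uds_output_def first_index_eq_Some_iff
  by (smt (verit, best) fun_upd_apply)

lemma uds_output_couple_down_None:
  assumes "\<And>i. lo i \<le> hi i" and "uds_output hi T q z nu = None"
  shows "uds_output lo T q z nu = None"
  using assms unfolding uds_output_def first_index_eq_None_iff
  by (smt (verit, best))

lemma uds_output_past_crossing:
  assumes "\<And>i. hi i \<le> lo i + 1" "first_index (\<lambda>i. T \<le> hi i) = Some j"
    and "\<forall>k\<le>j. uds_output lo T q z nu \<noteq> Some k"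
  shows "nu j - z < 1 - 2 * q"
proof -
  have "\<not> (T \<le> lo j \<or> T + z - 2 * q \<le> lo j + nu j)"
    using first_index_le[of "\<lambda>i. T \<le> lo i \<or> T + z - 2 * q \<le> lo i + nu i" j] assms(3)
    unfolding uds_output_def by blast
  moreover have "T \<le> hi j"
    using assms(2) by (simp add: first_index_eq_Some_iff)
  ultimately show ?thesis
    using assms(1)[of j] by linarith
qed

lemma uds_output_at_crossing:
  assumes "\<And>i. lo i \<le> hi i" "\<And>i. hi i \<le> lo i + 1"
    and "uds_output hi T q z nu = Some k" "T \<le> hi k"
  shows "first_index (\<lambda>i. T \<le> hi i) = Some k"
    and "uds_output lo T q z nu = Some k \<or> nu k - z < 1 - 2 * q"
proof -
  have hi_stops: "\<forall>i<k. \<not> (T \<le> hi i \<or> T + z - 2 * q \<le> hi i + nu i)"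
    using assms(3) by (simp add: uds_output_def first_index_eq_Some_iff)
  then show "first_index (\<lambda>i. T \<le> hi i) = Some k"
    using assms(4) by (simp add: first_index_eq_Some_iff)
  have "\<forall>i<k. \<not> (T \<le> lo i \<or> T + z - 2 * q \<le> lo i + nu i)"
    using hi_stops assms(1) by (meson add_right_mono order_trans)
  then show "uds_output lo T q z nu = Some k \<or> nu k - z < 1 - 2 * q"
    using assms(2)[of k] assms(4) by (auto simp: uds_output_def first_index_eq_Some_iff)
qed

lemma uds_mechanism_singleton_le:
  assumes "b > 0" "\<bar>a\<bar> + \<bar>c\<bar> \<le> 2"
    and coupling: "\<And>z nu. uds_output v T q z nu = y \<Longrightarrow>
      uds_output w T q (z + a) (nu(k := nu k + c)) = y"
  shows "emeasure (uds_mechanism b v T q) {y} \<le> exp (2 / b) * emeasure (uds_mechanism b w T q) {y}"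
proof -
  have "emeasure (uds_mechanism b v T q) {y}
      = emeasure (laplace_noise b) {x. uds_output v T q (fst x) (snd x) = y}"
    by (simp add: emeasure_uds_mechanism)
  also have "\<dots> \<le> emeasure (laplace_noise b)
      {x. (fst x + a, (snd x)(k := snd x k + c)) \<in> {x. uds_output w T q (fst x) (snd x) = y}}"
  proof (rule emeasure_mono)
    show "{x. (fst x + a, (snd x)(k := snd x k + c)) \<in> {x. uds_output w T q (fst x) (snd x) = y}}
        \<in> sets (laplace_noise b)"
      by measurable
  qed (use coupling in auto)
  also have "\<dots> \<le> exp ((\<bar>a\<bar> + \<bar>c\<bar>) / b)
      * emeasure (laplace_noise b) {x. uds_output w T q (fst x) (snd x) = y}"
    using assms(1) by (rule emeasure_laplace_noise_shift_le) measurable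
  also have "\<dots> \<le> exp (2 / b) * emeasure (uds_mechanism b w T q) {y}"
    unfolding emeasure_uds_mechanism singleton_iff
    using assms(1,2) by (intro mult_right_mono ennreal_leI) (auto simp: divide_right_mono)
  finally show ?thesis .
qed

lemma emeasure_laplace_noise_gap_le_tail:
  assumes "b > 0"
  shows "emeasure (laplace_noise b) {x. snd x j - fst x < 1 - 2 * q}
    \<le> ennreal (1 + exp (1 / b)) * emeasure (laplace b) {q<..}"
proof -
  have "emeasure (laplace_noise b) {x. snd x j < 1 - q}
      = emeasure (laplace_noise b)
          {x. (fst x + 0, (snd x)(j := snd x j + - 1)) \<in> {x. snd x j \<in> {..< - q}}}"
    by (intro arg_cong[where f="emeasure _"]) auto
  also have "\<dots> \<le> exp ((\<bar>0\<bar> + \<bar>- 1\<bar>) / b) * emeasure (laplace_noise b) {x. snd x j \<in> {..< - q}}"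
    using assms by (rule emeasure_laplace_noise_shift_le) measurable
  also have "\<dots> = exp (1 / b) * emeasure (laplace b) {q<..}"
    using emeasure_laplace_noise_component(2)[OF assms, of "{..< - q}" j]
    by (simp add: emeasure_laplace_lessThan_uminus)
  finally have query_low:
    "emeasure (laplace_noise b) {x. snd x j < 1 - q} \<le> exp (1 / b) * emeasure (laplace b) {q<..}" .
  have "emeasure (laplace_noise b) {x. snd x j - fst x < 1 - 2 * q}
      \<le> emeasure (laplace_noise b) ({x. fst x \<in> {q<..}} \<union> {x. snd x j < 1 - q})"
    by (intro emeasure_mono) (auto, measurable)
  also have "\<dots> \<le> emeasure (laplace_noise b) {x. fst x \<in> {q<..}}
      + emeasure (laplace_noise b) {x. snd x j < 1 - q}"
    by (rule emeasure_subadditive) measurable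
  also have "\<dots> \<le> emeasure (laplace b) {q<..} + exp (1 / b) * emeasure (laplace b) {q<..}"
    using query_low emeasure_laplace_noise_component(1)[OF assms, of "{q<..}"]
    by (intro add_mono) simp_all
  also have "\<dots> = ennreal (1 + exp (1 / b)) * emeasure (laplace b) {q<..}"
    by (simp add: distrib_right)
  finally show ?thesis .
qed

lemma emeasure_laplace_noise_gap_le:
  assumes "eps > 0" "0 \<le> delta"
    and quantile: "measure (laplace (2 / eps)) {..q} = 1 - delta / (2 * (1 + exp eps))"
  shows "emeasure (laplace_noise (2 / eps)) {x. snd x j - fst x < 1 - 2 * q} \<le> delta"
proof -
  define d where "d = delta / (2 * (1 + exp eps))"
  have "d \<ge> 0"
    using assms(2) by (simp add: d_def)
  interpret L: prob_space "laplace (2 / eps)"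
    using assms(1) by (intro prob_space_laplace) simp
  have "measure (laplace (2 / eps)) {q<..} = 1 - measure (laplace (2 / eps)) {..q}"
    using L.prob_compl[of "{..q}"] by (simp add: Compl_eq_Diff_UNIV[symmetric] Compl_atMost)
  then have upper_tail: "emeasure (laplace (2 / eps)) {q<..} = d"
    using quantile by (simp add: L.emeasure_eq_measure d_def)
  have "exp (eps / 2) \<le> exp eps"
    using assms(1) by simp
  then have "1 + exp (eps / 2) \<le> 2 * (1 + exp eps)"
    using exp_gt_zero[of eps] by (smt (verit))
  then have "(1 + exp (eps / 2)) * d \<le> (2 * (1 + exp eps)) * d"
    using \<open>d \<ge> 0\<close> by (rule mult_right_mono)
  also have "\<dots> = delta"
    by (simp add: d_def) (use exp_gt_zero[of eps] in linarith)
  finally have "ennreal ((1 + exp (eps / 2)) * d) \<le> delta"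
    by (rule ennreal_leI)
  then show ?thesis
    using emeasure_laplace_noise_gap_le_tail[of "2 / eps" j q] assms(1) \<open>d \<ge> 0\<close>
    by (simp add: upper_tail ennreal_mult)
qed

lemma uds_mechanism_past_crossing_le:
  assumes "\<And>i. hi i \<le> lo i + 1"
    and gap: "\<And>j. emeasure (laplace_noise b) {x. snd x j - fst x < 1 - 2 * q} \<le> delta"
  shows "emeasure (uds_mechanism b lo T q)
      {y. case y of None \<Rightarrow> \<exists>i. T \<le> hi i | Some k \<Rightarrow> \<exists>i<k. T \<le> hi i} \<le> delta"
proof (cases "first_index (\<lambda>i. T \<le> hi i)")
  case None
  then have "{y. case y of None \<Rightarrow> \<exists>i. T \<le> hi i | Some k \<Rightarrow> \<exists>i<k. T \<le> hi i} = {}"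
    by (auto simp: first_index_eq_None_iff split: option.splits)
  then show ?thesis
    by simp
next
  case (Some j)
  have "nu j - z < 1 - 2 * q"
    if "case uds_output lo T q z nu of None \<Rightarrow> \<exists>i. T \<le> hi i | Some k \<Rightarrow> \<exists>i<k. T \<le> hi i" for z nu
  proof (rule uds_output_past_crossing[OF assms(1) Some], intro allI impI notI)
    fix k
    assume "k \<le> j" "uds_output lo T q z nu = Some k"
    with that Some show False
      by (auto simp: first_index_eq_Some_iff)
  qed
  then have "{x. uds_output lo T q (fst x) (snd x)
      \<in> {y. case y of None \<Rightarrow> \<exists>i. T \<le> hi i | Some k \<Rightarrow> \<exists>i<k. T \<le> hi i}}
    \<subseteq> {x. snd x j - fst x < 1 - 2 * q}"
    by auto
  then show ?thesis
    unfolding emeasure_uds_mechanism by (rule order_trans[OF emeasure_mono gap]) measurable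
qed

lemma uds_mechanism_at_crossing_le:
  assumes mono: "\<And>i. lo i \<le> hi i" "\<And>i. hi i \<le> lo i + 1"
    and gap: "\<And>j. emeasure (laplace_noise b) {x. snd x j - fst x < 1 - 2 * q} \<le> delta"
  shows "emeasure (uds_mechanism b hi T q) (A \<inter> {y. \<exists>k. y = Some k \<and> T \<le> hi k})
    \<le> emeasure (uds_mechanism b lo T q) (A \<inter> {y. \<exists>k. y = Some k \<and> T \<le> hi k}) + delta"
    (is "_ \<le> emeasure _ (A \<inter> ?B) + _")
proof (cases "first_index (\<lambda>i. T \<le> hi i)")
  case None
  then show ?thesis
    by (simp add: first_index_eq_None_iff)
next
  case (Some j)
  have "{x. uds_output hi T q (fst x) (snd x) \<in> A \<inter> ?B}
      \<subseteq> {x. uds_output lo T q (fst x) (snd x) \<in> A \<inter> ?B} \<union> {x. snd x j - fst x < 1 - 2 * q}"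
  proof (intro subsetI)
    fix x :: "real \<times> (nat \<Rightarrow> real)"
    assume "x \<in> {x. uds_output hi T q (fst x) (snd x) \<in> A \<inter> ?B}"
    then obtain k where k: "uds_output hi T q (fst x) (snd x) = Some k" "T \<le> hi k" and "Some k \<in> A"
      by auto
    have "k = j"
      using uds_output_at_crossing(1)[OF mono k] Some by simp
    then show "x \<in> {x. uds_output lo T q (fst x) (snd x) \<in> A \<inter> ?B}
        \<union> {x. snd x j - fst x < 1 - 2 * q}"
      using uds_output_at_crossing(2)[OF mono k] k \<open>Some k \<in> A\<close> by auto
  qed
  then have "emeasure (laplace_noise b) {x. uds_output hi T q (fst x) (snd x) \<in> A \<inter> ?B}
      \<le> emeasure (laplace_noise b) {x. uds_output lo T q (fst x) (snd x) \<in> A \<inter> ?B}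
        + emeasure (laplace_noise b) {x. snd x j - fst x < 1 - 2 * q}"
    by (intro order_trans[OF emeasure_mono emeasure_subadditive]) measurable
  then show ?thesis
    unfolding emeasure_uds_mechanism using gap[of j] by (meson add_left_mono order_trans)
qed

lemma uds_mechanism_lower_le_upper:
  assumes "b > 0" and mono: "\<And>i. lo i \<le> hi i" "\<And>i. hi i \<le> lo i + 1"
    and gap: "\<And>j. emeasure (laplace_noise b) {x. snd x j - fst x < 1 - 2 * q} \<le> delta"
  shows "emeasure (uds_mechanism b lo T q) A
    \<le> exp (2 / b) * emeasure (uds_mechanism b hi T q) A + delta"
proof (rule emeasure_discrete_le_mult_add)
  let ?B = "{y. case y of None \<Rightarrow> \<exists>i. T \<le> hi i | Some k \<Rightarrow> \<exists>i<k. T \<le> hi i}"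
  show "emeasure (uds_mechanism b lo T q) {y} \<le> exp (2 / b) * emeasure (uds_mechanism b hi T q) {y}"
    if "y \<notin> ?B" for y
  proof (cases y)
    case None
    with that show ?thesis
      using uds_output_couple_up_None[OF mono(2)]
      by (intro uds_mechanism_singleton_le[where a = 1 and c = 0 and k = 0] \<open>b > 0\<close>)
        (auto simp: not_le)
  next
    case (Some k)
    with that show ?thesis
      using uds_output_couple_up_Some[OF mono] mono[of k]
      by (intro uds_mechanism_singleton_le[where a = 1 and c = "1 - (hi k - lo k)" and k = k]
          \<open>b > 0\<close>)
        (auto simp: not_le)
  qed
  have "emeasure (uds_mechanism b lo T q) (A \<inter> ?B) \<le> emeasure (uds_mechanism b lo T q) ?B"
    by (rule emeasure_mono) simp_all
  also have "\<dots> \<le> delta"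
    by (rule uds_mechanism_past_crossing_le[OF mono(2) gap])
  finally show "emeasure (uds_mechanism b lo T q) (A \<inter> ?B)
      \<le> emeasure (uds_mechanism b hi T q) (A \<inter> ?B) + delta"
    by (simp add: add_increasing order_trans)
qed (use \<open>b > 0\<close> in simp_all)

lemma uds_mechanism_upper_le_lower:
  assumes "b > 0" and mono: "\<And>i. lo i \<le> hi i" "\<And>i. hi i \<le> lo i + 1"
    and gap: "\<And>j. emeasure (laplace_noise b) {x. snd x j - fst x < 1 - 2 * q} \<le> delta"
  shows "emeasure (uds_mechanism b hi T q) A
    \<le> exp (2 / b) * emeasure (uds_mechanism b lo T q) A + delta"
proof (rule emeasure_discrete_le_mult_add)
  let ?B = "{y. \<exists>k. y = Some k \<and> T \<le> hi k}"
  show "emeasure (uds_mechanism b hi T q) {y} \<le> exp (2 / b) * emeasure (uds_mechanism b lo T q) {y}"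
    if "y \<notin> ?B" for y
  proof (cases y)
    case None
    then show ?thesis
      using uds_output_couple_down_None[OF mono(1)]
      by (intro uds_mechanism_singleton_le[where a = 0 and c = 0 and k = 0] \<open>b > 0\<close>) auto
  next
    case (Some k)
    with that show ?thesis
      using uds_output_couple_down_Some[OF mono(1)] mono[of k]
      by (intro uds_mechanism_singleton_le[where a = 0 and c = "hi k - lo k" and k = k] \<open>b > 0\<close>)
        (auto simp: not_le)
  qed
  show "emeasure (uds_mechanism b hi T q) (A \<inter> ?B)
      \<le> emeasure (uds_mechanism b lo T q) (A \<inter> ?B) + delta"
    by (rule uds_mechanism_at_crossing_le[OF mono gap])
qed (use \<open>b > 0\<close> in simp_all)

lemma uds_mechanism_ordered_neighbours:
  assumes "eps > 0" "0 \<le> delta"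
    and quantile: "measure (laplace (2 / eps)) {..q} = 1 - delta / (2 * (1 + exp eps))"
    and mono: "\<And>i. lo i \<le> hi i" "\<And>i. hi i \<le> lo i + 1"
  shows "measure (uds_mechanism (2 / eps) lo T q) S
      \<le> exp eps * measure (uds_mechanism (2 / eps) hi T q) S + delta"
    and "measure (uds_mechanism (2 / eps) hi T q) S
      \<le> exp eps * measure (uds_mechanism (2 / eps) lo T q) S + delta"
proof -
  have b: "2 / eps > 0" and cost: "2 / (2 / eps) = eps"
    using assms(1) by simp_all
  note gap = emeasure_laplace_noise_gap_le[OF assms(1,2) quantile]
  have finite: "finite_measure (uds_mechanism (2 / eps) v T q)" for v
    using prob_space_uds_mechanism[OF b] by (rule prob_space.finite_measure)
  show "measure (uds_mechanism (2 / eps) lo T q) S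
      \<le> exp eps * measure (uds_mechanism (2 / eps) hi T q) S + delta"
    using uds_mechanism_lower_le_upper[OF b mono gap, where T = T and A = S] assms(2)
    by (intro measure_le_of_emeasure_le finite) (simp_all add: cost)
  show "measure (uds_mechanism (2 / eps) hi T q) S
      \<le> exp eps * measure (uds_mechanism (2 / eps) lo T q) S + delta"
    using uds_mechanism_upper_le_lower[OF b mono gap, where T = T and A = S] assms(2)
    by (intro measure_le_of_emeasure_le finite) (simp_all add: cost)
qed

theorem theorem4p2:
  fixes eps delta T q :: real
    and f :: "nat \<Rightarrow> 'd \<Rightarrow> real"
    and nbr :: "'d \<Rightarrow> 'd \<Rightarrow> bool"
  assumes eps_pos: "eps > 0"
    and delta: "0 < delta" "delta < 1"
    and sens: "\<And>i D D'. nbr D D' \<Longrightarrow> \<bar>f i D - f i D'\<bar> \<le> 1"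
    and unidir: "\<And>D D'. nbr D D' \<Longrightarrow> (\<exists>i. f i D > f i D') \<Longrightarrow> \<not> (\<exists>j. f j D < f j D')"
    and quantile: "measure (laplace (2 / eps)) {..q} = 1 - delta / (2 * (1 + exp eps))"
  shows "diff_private eps delta nbr (strict_uds_above_threshold eps f T q)"
  unfolding diff_private_def strict_uds_above_threshold_eq_uds_mechanism
proof (intro allI impI conjI ballI)
  fix D D' S
  assume "nbr D D'"
  have up: "f i D' \<le> f i D + 1" and down: "f i D \<le> f i D' + 1" for i
    using sens[OF \<open>nbr D D'\<close>, of i] by (auto simp: abs_le_iff)
  note neighbours = uds_mechanism_ordered_neighbours[OF eps_pos less_imp_le[OF delta(1)] quantile]
  consider "\<And>i. f i D \<le> f i D'" | "\<And>i. f i D' \<le> f i D"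
    using unidir[OF \<open>nbr D D'\<close>] by (meson not_le)
  then show
    "measure (uds_mechanism (2 / eps) (\<lambda>i. f i D) T q) S
      \<le> exp eps * measure (uds_mechanism (2 / eps) (\<lambda>i. f i D') T q) S + delta"
    "measure (uds_mechanism (2 / eps) (\<lambda>i. f i D') T q) S
      \<le> exp eps * measure (uds_mechanism (2 / eps) (\<lambda>i. f i D) T q) S + delta"
    by (cases; simp add: neighbours[where lo = "\<lambda>i. f i D" and hi = "\<lambda>i. f i D'", OF _ up]
        neighbours[where lo = "\<lambda>i. f i D'" and hi = "\<lambda>i. f i D", OF _ down])+
qed

end
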